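(* Let $G$ be a graph containing a triangle $u_1u_2u_3$ such that $d_G(u_1)=2$, $d_G(u_2)=3$ and $N_G(u_2)=\{u_1,u_3,u_4\}$. Let $D$ be an orientation of $G$ in which the edges incident with $u_1$ or $u_2$ are oriented as the arcs $(u_1,u_3)$, $(u_2,u_1)$, $(u_2,u_3)$, $(u_4,u_2)$, and let $D'=D-\{u_1,u_2\}$. Then $\mathrm{diff}(D)=\mathrm{diff}(D')$. In particular, $D$ is an AT-orientation if and only if $D'$ is an AT-orientation.
   Context: For an orientation $D$ of a graph, an Eulerian sub-digraph of $D$ is a spanning sub-digraph $F$ of $D$ with $d^+_F(v)=d^-_F(v)$ for every vertex $v$; $\mathrm{diff}(D)$ is the number of Eulerian sub-digraphs of $D$ with an even number of arcs minus the number with an odd number of arcs; $D$ is an AT-orientation if $\mathrm{diff}(D)\ne 0$. *)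

theory Defs
  imports Main
begin

text \<open>A finite simple graph: vertex set V, edge relation E given as a symmetric,
  irreflexive set of ordered pairs (each undirected edge xy appears as (x,y) and (y,x)).\<close>
definition simple_graph :: "'a set \<Rightarrow> ('a \<times> 'a) set \<Rightarrow> bool" where
  "simple_graph V E \<longleftrightarrow> finite V \<and> E \<subseteq> V \<times> V \<and> sym E \<and> irrefl E"

definition nbhd :: "('a \<times> 'a) set \<Rightarrow> 'a \<Rightarrow> 'a set" where
  "nbhd E v = {w. (v, w) \<in> E}"

definition degree :: "('a \<times> 'a) set \<Rightarrow> 'a \<Rightarrow> nat" where
  "degree E v = card (nbhd E v)"

definition is_orientation :: "('a \<times> 'a) set \<Rightarrow> ('a \<times> 'a) set \<Rightarrow> bool" where
  "is_orientation E A \<longleftrightarrow> A \<subseteq> E \<and> (\<forall>(x, y) \<in> E. (x, y) \<in> A \<longleftrightarrow> (y, x) \<notin> A)"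

definition outdeg :: "('a \<times> 'a) set \<Rightarrow> 'a \<Rightarrow> nat" where
  "outdeg F v = card {w. (v, w) \<in> F}"

definition indeg :: "('a \<times> 'a) set \<Rightarrow> 'a \<Rightarrow> nat" where
  "indeg F v = card {w. (w, v) \<in> F}"

text \<open>Eulerian (spanning) sub-digraph of the digraph (V,A), identified with its arc set F.\<close>
definition eulerian_sub :: "'a set \<Rightarrow> ('a \<times> 'a) set \<Rightarrow> ('a \<times> 'a) set \<Rightarrow> bool" where
  "eulerian_sub V A F \<longleftrightarrow> F \<subseteq> A \<and> (\<forall>v \<in> V. outdeg F v = indeg F v)"

definition diff :: "'a set \<Rightarrow> ('a \<times> 'a) set \<Rightarrow> int" where
  "diff V A = int (card {F. eulerian_sub V A F \<and> even (card F)})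
            - int (card {F. eulerian_sub V A F \<and> odd (card F)})"

definition AT_orientation :: "'a set \<Rightarrow> ('a \<times> 'a) set \<Rightarrow> bool" where
  "AT_orientation V A \<longleftrightarrow> diff V A \<noteq> 0"

definition del_verts_arcs :: "('a \<times> 'a) set \<Rightarrow> 'a set \<Rightarrow> ('a \<times> 'a) set" where
  "del_verts_arcs A S = {(x, y) \<in> A. x \<notin> S \<and> y \<notin> S}"

end

theory Submission
  imports Defs
begin

text \<open>Split an Eulerian sub-digraph F of D as F' \<union> Y, where F' avoids u1, u2 and Y consists of
  some of the four arcs at u1, u2. Balance at u1 and u2 forces Y to be empty, the path
  u4 u2 u1 u3, or the path u4 u2 u3. The two paths have the same net out-degree at every vertex
  but have lengths 3 and 2, so for every admissible F' their contributions to diff cancel, while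
  Y = {} leaves exactly the Eulerian sub-digraphs of D'.\<close>

definition net :: "('a \<times> 'a) set \<Rightarrow> 'a \<Rightarrow> int" where
  "net F v = int (outdeg F v) - int (indeg F v)"

definition diff_demand :: "'a set \<Rightarrow> ('a \<times> 'a) set \<Rightarrow> ('a \<Rightarrow> int) \<Rightarrow> int" where
  "diff_demand V A d = (\<Sum>F | F \<subseteq> A \<and> (\<forall>v\<in>V. net F v = d v). (-1) ^ card F)"

lemma outdeg_eq_sum:
  assumes "finite F"
  shows "outdeg F v = (\<Sum>a\<in>F. of_bool (fst a = v))"
proof -
  have "{w. (v, w) \<in> F} = snd ` (F \<inter> {a. fst a = v})" by force
  moreover have "inj_on snd (F \<inter> {a. fst a = v})" by (auto intro: inj_onI)
  ultimately show ?thesis using assms by (simp add: outdeg_def card_image)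
qed

lemma indeg_eq_sum:
  assumes "finite F"
  shows "indeg F v = (\<Sum>a\<in>F. of_bool (snd a = v))"
proof -
  have "{w. (w, v) \<in> F} = fst ` (F \<inter> {a. snd a = v})" by force
  moreover have "inj_on fst (F \<inter> {a. snd a = v})" by (auto intro: inj_onI)
  ultimately show ?thesis using assms by (simp add: indeg_def card_image)
qed

lemma net_eq_sum:
  assumes "finite F"
  shows "net F v = (\<Sum>a\<in>F. of_bool (fst a = v) - of_bool (snd a = v))"
  using assms by (simp add: net_def outdeg_eq_sum indeg_eq_sum sum_subtractf)

lemma net_Un:
  assumes "finite F" "finite G" "F \<inter> G = {}"
  shows "net (F \<union> G) v = net F v + net G v"
  using assms by (simp add: net_eq_sum sum.union_disjoint)

lemma net_eq_0_if_untouched: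
  assumes "\<forall>(x, y) \<in> F. x \<noteq> v \<and> y \<noteq> v"
  shows "net F v = 0"
proof -
  have "{w. (v, w) \<in> F} = {}" "{w. (w, v) \<in> F} = {}" using assms by auto
  then show ?thesis by (simp add: net_def outdeg_def indeg_def)
qed

lemma eulerian_sub_iff_net:
  "eulerian_sub V A F \<longleftrightarrow> F \<subseteq> A \<and> (\<forall>v\<in>V. net F v = 0)"
  by (simp add: eulerian_sub_def net_def)

lemma card_even_minus_card_odd_eq_sum:
  assumes "finite S"
  shows "int (card {F \<in> S. even (card F)}) - int (card {F \<in> S. odd (card F)})
    = (\<Sum>F\<in>S. (-1) ^ card F)"
proof -
  have "(\<Sum>F\<in>S. (-1::int) ^ card F)
      = (\<Sum>F\<in>S. of_bool (even (card F))) - (\<Sum>F\<in>S. of_bool (odd (card F)))"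
    by (subst sum_subtractf[symmetric]) (rule sum.cong, auto)
  then show ?thesis using assms by (simp add: Int_def conj_commute)
qed

lemma diff_eq_diff_demand:
  assumes "finite A"
  shows "diff V A = diff_demand V A (\<lambda>_. 0)"
proof -
  have "finite {F. eulerian_sub V A F}"
    using assms by (auto simp: eulerian_sub_def)
  then show ?thesis
    using card_even_minus_card_odd_eq_sum[of "{F. eulerian_sub V A F}"]
    by (simp add: diff_def diff_demand_def eulerian_sub_iff_net)
qed

lemma sum_Pow_Un_disjoint:
  assumes "finite A" "finite B" "A \<inter> B = {}"
  shows "(\<Sum>F\<in>Pow (A \<union> B). f F) = (\<Sum>F\<in>Pow A. \<Sum>G\<in>Pow B. f (F \<union> G))"
proof -
  have "bij_betw (\<lambda>(F, G). F \<union> G) (Pow A \<times> Pow B) (Pow (A \<union> B))"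
    by (rule bij_betw_byWitness[where f' = "\<lambda>H. (H \<inter> A, H \<inter> B)"]) (use assms in auto)
  then have "(\<Sum>F\<in>Pow (A \<union> B). f F) = (\<Sum>(F, G)\<in>Pow A \<times> Pow B. f (F \<union> G))"
    by (simp add: sum.reindex_bij_betw[symmetric] case_prod_unfold)
  then show ?thesis by (simp add: sum.cartesian_product)
qed

lemma diff_demand_Un:
  assumes A: "finite A" and X: "finite X" and disj: "A \<inter> X = {}"
  shows "diff_demand V (A \<union> X) d
    = (\<Sum>Y\<in>Pow X. (-1) ^ card Y * diff_demand V A (\<lambda>v. d v - net Y v))"
proof -
  let ?term = "\<lambda>d F. if \<forall>v\<in>V. net F v = d v then (-1::int) ^ card F else 0"
  have as_sum: "diff_demand V B e = (\<Sum>F\<in>Pow B. ?term e F)" if "finite B" for B e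
    using that by (simp add: diff_demand_def sum.inter_filter[symmetric] Collect_conj_eq Int_commute)
  have term_Un: "?term d (F \<union> Y) = (-1) ^ card Y * ?term (\<lambda>v. d v - net Y v) F"
    if "F \<subseteq> A" "Y \<subseteq> X" for F Y
  proof -
    have "finite F" "finite Y" "F \<inter> Y = {}"
      using that A X disj finite_subset by blast+
    then have "net (F \<union> Y) v = d v \<longleftrightarrow> net F v = d v - net Y v" for v
      by (auto simp: net_Un)
    then show ?thesis
      using \<open>finite F\<close> \<open>finite Y\<close> \<open>F \<inter> Y = {}\<close> by (simp add: card_Un_disjoint power_add)
  qed
  have "diff_demand V (A \<union> X) d = (\<Sum>F\<in>Pow A. \<Sum>Y\<in>Pow X. ?term d (F \<union> Y))"
    using A X disj by (simp add: as_sum sum_Pow_Un_disjoint)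
  also have "\<dots> = (\<Sum>F\<in>Pow A. \<Sum>Y\<in>Pow X. (-1) ^ card Y * ?term (\<lambda>v. d v - net Y v) F)"
    using term_Un by (intro sum.cong) auto
  also have "\<dots> = (\<Sum>Y\<in>Pow X. \<Sum>F\<in>Pow A. (-1) ^ card Y * ?term (\<lambda>v. d v - net Y v) F)"
    by (rule sum.swap)
  also have "\<dots> = (\<Sum>Y\<in>Pow X. (-1) ^ card Y * diff_demand V A (\<lambda>v. d v - net Y v))"
    by (simp add: as_sum[OF A] sum_distrib_left)
  finally show ?thesis .
qed

lemma diff_demand_eq_0:
  assumes "v \<in> V" "\<forall>(x, y) \<in> A. x \<noteq> v \<and> y \<noteq> v" "d v \<noteq> 0"
  shows "diff_demand V A d = 0"
proof -
  have "\<not> (\<forall>w\<in>V. net F w = d w)" if "F \<subseteq> A" for F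
  proof -
    have "net F v = 0"
      using that assms(2) by (intro net_eq_0_if_untouched) auto
    then show ?thesis using assms(1,3) by metis
  qed
  then have no_solution: "{F. F \<subseteq> A \<and> (\<forall>v\<in>V. net F v = d v)} = {}"
    by blast
  show ?thesis
    unfolding diff_demand_def no_solution by simp
qed

lemma diff_Diff_untouched:
  assumes "\<forall>(x, y) \<in> A. x \<notin> S \<and> y \<notin> S"
  shows "diff (V - S) A = diff V A"
proof -
  have "net F v = 0" if "F \<subseteq> A" "v \<in> S" for F v
    using that assms by (intro net_eq_0_if_untouched) auto
  then have "eulerian_sub (V - S) A F \<longleftrightarrow> eulerian_sub V A F" for F
    by (auto simp: eulerian_sub_iff_net)
  then show ?thesis by (simp add: diff_def)
qed

lemma balanced_subsets_of_triangle_arcs: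
  assumes "distinct [u1, u2, u3, u4]"
    and Y: "Y \<subseteq> {(u1, u3), (u2, u1), (u2, u3), (u4, u2)}"
    and "net Y u1 = 0" "net Y u2 = 0"
  shows "Y = {} \<or> Y = {(u4, u2), (u2, u1), (u1, u3)} \<or> Y = {(u4, u2), (u2, u3)}"
proof -
  let ?X = "{(u1, u3), (u2, u1), (u2, u3), (u4, u2)}"
  have neq: "u1 \<noteq> u2" "u1 \<noteq> u3" "u1 \<noteq> u4" "u2 \<noteq> u3" "u2 \<noteq> u4" "u3 \<noteq> u4"
    using assms(1) by auto
  have net_Y: "net Y v = (\<Sum>a\<in>?X. if a \<in> Y then of_bool (fst a = v) - of_bool (snd a = v) else 0)" for v
  proof -
    have "?X \<inter> Y = Y" using Y by blast
    then show ?thesis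
      using Y by (simp add: net_eq_sum finite_subset sum.inter_restrict[symmetric])
  qed
  have "net Y u1 = of_bool ((u1, u3) \<in> Y) - of_bool ((u2, u1) \<in> Y)"
    "net Y u2 = of_bool ((u2, u1) \<in> Y) + of_bool ((u2, u3) \<in> Y) - of_bool ((u4, u2) \<in> Y)"
    using neq neq[symmetric] by (simp_all add: net_Y)
  then show ?thesis
    using assms(2-)
    by (cases "(u1, u3) \<in> Y"; cases "(u2, u1) \<in> Y"; cases "(u2, u3) \<in> Y"; cases "(u4, u2) \<in> Y")
      auto
qed

lemma net_path_shortcut:
  assumes "distinct [u1, u2, u3, u4]"
  shows "net {(u4, u2), (u2, u1), (u1, u3)} = net {(u4, u2), (u2, u3)}"
proof
  fix v
  have neq: "u1 \<noteq> u2" "u1 \<noteq> u3" "u2 \<noteq> u3" "u2 \<noteq> u4" "u3 \<noteq> u4"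
    using assms by auto
  then show "net {(u4, u2), (u2, u1), (u1, u3)} v = net {(u4, u2), (u2, u3)} v"
    using neq[symmetric] by (simp add: net_eq_sum)
qed

lemma diff_Un_triangle_arcs:
  assumes A: "finite A" and distinct: "distinct [u1, u2, u3, u4]" and "u1 \<in> V" "u2 \<in> V"
    and untouched: "\<forall>(x, y) \<in> A. x \<notin> {u1, u2} \<and> y \<notin> {u1, u2}"
  shows "diff V (A \<union> {(u1, u3), (u2, u1), (u2, u3), (u4, u2)}) = diff V A"
proof -
  let ?X = "{(u1, u3), (u2, u1), (u2, u3), (u4, u2)}"
  let ?P1 = "{(u4, u2), (u2, u1), (u1, u3)}" and ?P2 = "{(u4, u2), (u2, u3)}"
  let ?c = "\<lambda>Y. (-1) ^ card Y * diff_demand V A (\<lambda>v. 0 - net Y v)"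
  have neq: "u1 \<noteq> u2" "u1 \<noteq> u3" "u1 \<noteq> u4" "u2 \<noteq> u3" "u2 \<noteq> u4" "u3 \<noteq> u4"
    using distinct by auto
  have off_u1: "\<forall>(x, y) \<in> A. x \<noteq> u1 \<and> y \<noteq> u1"
    and off_u2: "\<forall>(x, y) \<in> A. x \<noteq> u2 \<and> y \<noteq> u2"
    and "A \<inter> ?X = {}"
    using untouched by auto
  have "diff V (A \<union> ?X) = diff_demand V (A \<union> ?X) (\<lambda>_. 0)"
    using A by (intro diff_eq_diff_demand) simp
  also have "\<dots> = (\<Sum>Y\<in>Pow ?X. ?c Y)"
    using A \<open>A \<inter> ?X = {}\<close> by (intro diff_demand_Un) simp_all
  also have "\<dots> = (\<Sum>Y\<in>{{}, ?P1, ?P2}. ?c Y)"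
  proof (rule sum.mono_neutral_right)
    show "\<forall>Y\<in>Pow ?X - {{}, ?P1, ?P2}. ?c Y = 0"
    proof
      fix Y assume "Y \<in> Pow ?X - {{}, ?P1, ?P2}"
      then have "net Y u1 \<noteq> 0 \<or> net Y u2 \<noteq> 0"
        using balanced_subsets_of_triangle_arcs[OF distinct, of Y] by auto
      then show "?c Y = 0"
        by (elim disjE) (simp_all add: diff_demand_eq_0[OF \<open>u1 \<in> V\<close> off_u1]
          diff_demand_eq_0[OF \<open>u2 \<in> V\<close> off_u2])
    qed
  qed auto
  also have "\<dots> = ?c {} + (?c ?P1 + ?c ?P2)"
  proof -
    have "(u2, u1) \<notin> ?P2" using neq by auto
    then have "?P1 \<noteq> ?P2" by blast
    then show ?thesis by simp
  qed
  also have "?c ?P1 + ?c ?P2 = 0"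
    using neq by (simp add: net_path_shortcut[OF distinct])
  also have "?c {} = diff V A"
    using A by (simp add: diff_eq_diff_demand net_def outdeg_def indeg_def)
  finally show ?thesis by simp
qed

lemma arcs_at_degree_two_triangle:
  assumes G: "simple_graph V E" and D: "is_orientation E A"
    and "u2 \<noteq> u3" "(u1, u2) \<in> E" "(u1, u3) \<in> E"
    and "degree E u1 = 2" and nbhd_u2: "nbhd E u2 = {u1, u3, u4}"
    and arcs: "(u1, u3) \<in> A" "(u2, u1) \<in> A" "(u2, u3) \<in> A" "(u4, u2) \<in> A"
  shows "A = del_verts_arcs A {u1, u2} \<union> {(u1, u3), (u2, u1), (u2, u3), (u4, u2)}"
proof -
  have nbhd_u1: "nbhd E u1 = {u2, u3}"
  proof (rule card_subset_eq[symmetric])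
    show "finite (nbhd E u1)"
      using G by (auto simp: simple_graph_def nbhd_def intro: finite_subset)
    show "{u2, u3} \<subseteq> nbhd E u1"
      using assms by (simp add: nbhd_def)
    show "card {u2, u3} = card (nbhd E u1)"
      using assms by (simp add: degree_def)
  qed
  have touching: "(x, y) \<in> {(u1, u3), (u2, u1), (u2, u3), (u4, u2)}"
    if "(x, y) \<in> A" "x \<in> {u1, u2} \<or> y \<in> {u1, u2}" for x y
  proof -
    have "(x, y) \<in> E" using that(1) D by (auto simp: is_orientation_def)
    then have "(y, x) \<in> E" using G by (auto simp: simple_graph_def sym_def)
    have reverse: "(b, a) \<notin> A" if "(a, b) \<in> A" for a b
      using that D unfolding is_orientation_def by blast
    have nb1: "w = u2 \<or> w = u3" if "(u1, w) \<in> E" for w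
      using that nbhd_u1 by (auto simp: nbhd_def)
    have nb2: "w = u1 \<or> w = u3 \<or> w = u4" if "(u2, w) \<in> E" for w
      using that nbhd_u2 by (auto simp: nbhd_def)
    show ?thesis
      using that \<open>(x, y) \<in> E\<close> \<open>(y, x) \<in> E\<close> nb1[of x] nb1[of y] nb2[of x] nb2[of y]
        reverse[OF that(1)] arcs by blast
  qed
  show ?thesis
    using touching arcs by (auto simp: del_verts_arcs_def)
qed

theorem mainTheorem7:
  fixes V :: "'a set" and E A :: "('a \<times> 'a) set" and u1 u2 u3 u4 :: 'a
  assumes "simple_graph V E"
    and "is_orientation E A"
    and "u1 \<in> V" "u2 \<in> V" "u3 \<in> V" "u4 \<in> V"
    and "u1 \<noteq> u2" "u2 \<noteq> u3" "u1 \<noteq> u3"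
    and "(u1, u2) \<in> E" "(u2, u3) \<in> E" "(u1, u3) \<in> E"
    and "degree E u1 = 2" "degree E u2 = 3"
    and "nbhd E u2 = {u1, u3, u4}"
    and "(u1, u3) \<in> A" "(u2, u1) \<in> A" "(u2, u3) \<in> A" "(u4, u2) \<in> A"
  shows "diff V A = diff (V - {u1, u2}) (del_verts_arcs A {u1, u2})
         \<and> (AT_orientation V A \<longleftrightarrow> AT_orientation (V - {u1, u2}) (del_verts_arcs A {u1, u2}))"
proof -
  let ?A' = "del_verts_arcs A {u1, u2}"
  have "u4 \<noteq> u1" "u4 \<noteq> u3"
    using assms(7-9,14,15) by (auto simp: degree_def card_insert_if)
  moreover have "u4 \<noteq> u2"
    using assms(1,15) by (auto simp: nbhd_def simple_graph_def irrefl_def)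
  ultimately have distinct: "distinct [u1, u2, u3, u4]"
    using assms(7-9) by auto
  have finite: "finite ?A'"
  proof (rule finite_subset)
    show "?A' \<subseteq> V \<times> V"
      using assms(1,2) by (auto simp: simple_graph_def is_orientation_def del_verts_arcs_def)
    show "finite (V \<times> V)"
      using assms(1) by (simp add: simple_graph_def)
  qed
  have untouched: "\<forall>(x, y) \<in> ?A'. x \<notin> {u1, u2} \<and> y \<notin> {u1, u2}"
    by (auto simp: del_verts_arcs_def)
  from arcs_at_degree_two_triangle[OF assms(1,2,8,10,12,13,15-19)]
  have "diff V A = diff V (?A' \<union> {(u1, u3), (u2, u1), (u2, u3), (u4, u2)})"
    by (rule arg_cong)
  also have "\<dots> = diff V ?A'"
    by (rule diff_Un_triangle_arcs[OF finite distinct assms(3,4) untouched])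
  also have "\<dots> = diff (V - {u1, u2}) ?A'"
    using diff_Diff_untouched[OF untouched] by simp
  finally show ?thesis
    by (simp add: AT_orientation_def)
qed

end
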